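(* For $v\in\mathbb{R}$ consider the system of ODEs for $(a,b,r,s)(\xi)\in\mathbb{R}^4$: $$\partial_\xi a=r,\qquad \partial_\xi b=s,\qquad \partial_\xi r=-vr-\frac{sa}{2}+\frac{a|r|}{2},\qquad \partial_\xi s=-vs-ra.$$ Consider the boundary conditions (H1) $(a,b,r,s)(-\infty)=(a_0,b_0,0,0)$ and $(a,b,r,s)(+\infty)=(0,2,0,0)$; (H2) $(a,b,r,s)(-\infty)=(0,-2,0,0)$ and $(a,b,r,s)(+\infty)=(a_0,b_0,0,0)$. Then: 1. For every $v>0$ there are exactly two pairs $(a_0,b_0)$ for which there exists a non-constant trajectory satisfying (H1), namely $(a_0,b_0)=(4v,-8v+2)$, for which $r(\xi)<0$ for all $\xi\in\mathbb{R}$ along the trajectory, and $(a_0,b_0)=(-4v,-8v+2)$, for which $r(\xi)>0$ for all $\xi$. Also, for $v>0$ there is no non-constant trajectory satisfying (H2) for any $(a_0,b_0)$. 2. For $v=0$ there is no non-constant trajectory converging to equilibria as $\xi\to\pm\infty$ such that $(a,b,r,s)(-\infty)=(0,b_0,0,0)$ or $(a,b,r,s)(+\infty)=(0,b_0,0,0)$, for any $b_0\in\mathbb{R}$. 3. For every $v<0$ there are exactly two pairs $(a_0,b_0)$ for which there exists a non-constant trajectory satisfying (H2), namely $(a_0,b_0)=(4v,-8v-2)$, with $r(\xi)<0$ for all $\xi$, and $(a_0,b_0)=(-4v,-8v-2)$, with $r(\xi)>0$ for all $\xi$. Also, for $v<0$ there is no non-constant trajectory satisfying (H1) for any $(a_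0,b_0)$.
   Context: A trajectory is a solution $(a,b,r,s):\mathbb{R}\to\mathbb{R}^4$ of the system defined for all $\xi\in\mathbb{R}$; the equilibria of the system are exactly the points with $r=s=0$. *)

theory Defs
  imports "HOL-Analysis.Analysis"
begin

definition trajectory :: "real \<Rightarrow> (real \<Rightarrow> real) \<Rightarrow> (real \<Rightarrow> real) \<Rightarrow> (real \<Rightarrow> real) \<Rightarrow> (real \<Rightarrow> real) \<Rightarrow> bool" where
  "trajectory v a b r s \<longleftrightarrow>
     (\<forall>x. (a has_real_derivative r x) (at x)
        \<and> (b has_real_derivative s x) (at x)
        \<and> (r has_real_derivative (- v * r x - s x * a x / 2 + a x * \<bar>r x\<bar> / 2)) (at x)
        \<and> (s has_real_derivative (- v * s x - r x * a x)) (at x))"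

definition state :: "(real \<Rightarrow> real) \<Rightarrow> (real \<Rightarrow> real) \<Rightarrow> (real \<Rightarrow> real) \<Rightarrow> (real \<Rightarrow> real) \<Rightarrow> real \<Rightarrow> real \<times> real \<times> real \<times> real" where
  "state a b r s x = (a x, b x, r x, s x)"

definition nonconstant :: "(real \<Rightarrow> real) \<Rightarrow> (real \<Rightarrow> real) \<Rightarrow> (real \<Rightarrow> real) \<Rightarrow> (real \<Rightarrow> real) \<Rightarrow> bool" where
  "nonconstant a b r s \<longleftrightarrow> (\<exists>x y. state a b r s x \<noteq> state a b r s y)"

definition H1 :: "real \<Rightarrow> real \<Rightarrow> (real \<Rightarrow> real) \<Rightarrow> (real \<Rightarrow> real) \<Rightarrow> (real \<Rightarrow> real) \<Rightarrow> (real \<Rightarrow> real) \<Rightarrow> bool" where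
  "H1 a0 b0 a b r s \<longleftrightarrow>
     (state a b r s \<longlongrightarrow> (a0, b0, 0, 0)) at_bot \<and> (state a b r s \<longlongrightarrow> (0, 2, 0, 0)) at_top"

definition H2 :: "real \<Rightarrow> real \<Rightarrow> (real \<Rightarrow> real) \<Rightarrow> (real \<Rightarrow> real) \<Rightarrow> (real \<Rightarrow> real) \<Rightarrow> (real \<Rightarrow> real) \<Rightarrow> bool" where
  "H2 a0 b0 a b r s \<longleftrightarrow>
     (state a b r s \<longlongrightarrow> (0, -2, 0, 0)) at_bot \<and> (state a b r s \<longlongrightarrow> (a0, b0, 0, 0)) at_top"

end

theory Submission
  imports Defs "HOL-Real_Asymp.Real_Asymp"
begin

text \<open>Along every trajectory \<open>(s\<^sup>3 - 3 s r\<^sup>2 - 2 |r|\<^sup>3) exp (3 v \<xi>)\<close> is constant; on a connection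
  between equilibria it must vanish, so \<open>s = -|r|\<close> or \<open>s = 2|r|\<close>. Then \<open>|r'| \<le> L |r|\<close>, so by a
  Gronwall argument \<open>r\<close> has no zero on a non-constant connection: \<open>r\<close> has a fixed sign \<open>e\<close> and
  \<open>s = c r\<close> with a constant \<open>c \<in> {-e, 2e}\<close>. Now \<open>r - ((e - c)/4 a\<^sup>2 - v a)\<close> and \<open>b - c a\<close> are
  first integrals, and \<open>a\<close> is strictly monotone between its two limits, which are therefore the
  roots of that quadratic; the sign of \<open>r\<close> between the roots forces \<open>c = 2e\<close>, whence
  \<open>a(-\<infinity>) + a(+\<infinity>) = -4 e v\<close> and \<open>b(+\<infinity>) - b(-\<infinity>) = 2 e (a(+\<infinity>) - a(-\<infinity>))\<close>.
  Conversely, for \<open>s = 2 e r\<close> the system reduces to the logistic equation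
  \<open>a' = -e/4 a\<^sup>2 - v a\<close>, solved by \<open>a = -4 e v / (1 + exp (v \<xi>))\<close>.\<close>

lemma has_real_derivative_abs_cube: "((\<lambda>t::real. \<bar>t\<bar>^3) has_real_derivative 3 * t * \<bar>t\<bar>) (at t)"
proof -
  consider "t > 0" | "t < 0" | "t = 0" by linarith
  then show ?thesis
  proof cases
    case 1
    have "((\<lambda>t::real. t^3) has_real_derivative 3 * t * \<bar>t\<bar>) (at t)"
      using 1 by (auto intro!: derivative_eq_intros simp: power2_eq_square)
    then show ?thesis
      by (rule has_field_derivative_transform_within_open[where S="{0<..}"]) (use 1 in auto)
  next
    case 2
    have "((\<lambda>t::real. - (t^3)) has_real_derivative 3 * t * \<bar>t\<bar>) (at t)"
      using 2 by (auto intro!: derivative_eq_intros simp: power2_eq_square)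
    then show ?thesis
      by (rule has_field_derivative_transform_within_open[where S="{..<0}"]) (use 2 in auto)
  next
    case 3
    have "(\<lambda>y::real. (\<bar>y\<bar>^3 - \<bar>0\<bar>^3) / (y - 0)) = (\<lambda>y. y * \<bar>y\<bar>)"
      by (rule ext) (simp add: power3_eq_cube)
    moreover have "((\<lambda>y::real. y * \<bar>y\<bar>) \<longlongrightarrow> 0) (at 0)"
      by (auto intro!: tendsto_eq_intros)
    ultimately show ?thesis
      unfolding 3 has_field_derivative_iff by simp
  qed
qed

lemma continuous_nonvanishing_sign_cases:
  fixes f :: "real \<Rightarrow> real"
  assumes "continuous_on UNIV f" and "\<And>x. f x \<noteq> 0"
  shows "(\<forall>x. 0 < f x) \<or> (\<forall>x. f x < 0)"
proof (rule ccontr)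
  assume "\<not> ?thesis"
  then obtain x y where "f x \<le> 0" "0 \<le> f y"
    by (auto simp: not_less)
  moreover have "connected (range f)"
    using connected_continuous_image[OF assms(1) connected_UNIV] .
  ultimately have "0 \<in> range f"
    by (auto intro: connectedD_interval)
  with assms(2) show False by auto
qed

lemma bounded_if_tendsto_at_bot_at_top:
  fixes f :: "real \<Rightarrow> real"
  assumes "continuous_on UNIV f" and "(f \<longlongrightarrow> l) at_bot" and "(f \<longlongrightarrow> l') at_top"
  obtains M where "\<And>x. \<bar>f x\<bar> \<le> M"
proof -
  obtain S where S: "\<And>x. x \<le> S \<Longrightarrow> \<bar>f x - l\<bar> < 1"
    using assms(2)[unfolded tendsto_iff, rule_format, of 1] by (auto simp: eventually_at_bot_linorder dist_real_def)
  obtain T where T: "\<And>x. T \<le> x \<Longrightarrow> \<bar>f x - l'\<bar> < 1"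
    using assms(3)[unfolded tendsto_iff, rule_format, of 1] by (auto simp: eventually_at_top_linorder dist_real_def)
  have "compact (f ` {S..T})"
    by (intro compact_continuous_image continuous_on_subset[OF assms(1)]) auto
  then obtain B where B: "\<And>x. x \<in> {S..T} \<Longrightarrow> \<bar>f x\<bar> \<le> B"
    by (meson compact_imp_bounded bounded_real image_eqI)
  show ?thesis
  proof
    fix x
    consider "x \<le> S" | "x \<in> {S..T}" | "T \<le> x" by fastforce
    then show "\<bar>f x\<bar> \<le> max B (max (\<bar>l\<bar> + 1) (\<bar>l'\<bar> + 1))"
      by cases (use S[of x] T[of x] B[of x] in auto)
  qed
qed

lemma strict_mono_between_limits:
  fixes f :: "real \<Rightarrow> real"
  assumes "strict_mono f" and "(f \<longlongrightarrow> l) at_bot" and "(f \<longlongrightarrow> l') at_top"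
  shows "l < f x" and "f x < l'"
proof -
  have "l \<le> f (x - 1)"
    by (rule tendsto_upperbound[OF assms(2)])
       (auto simp: eventually_at_bot_linorder intro!: exI[of _ "x - 1"] strict_mono_less_eq[OF assms(1), THEN iffD2])
  also have "f (x - 1) < f x"
    using assms(1) by (simp add: strict_mono_less)
  finally show "l < f x" .
  have "f x < f (x + 1)"
    using assms(1) by (simp add: strict_mono_less)
  also have "f (x + 1) \<le> l'"
    by (rule tendsto_lowerbound[OF assms(3)])
       (auto simp: eventually_at_top_linorder intro!: exI[of _ "x + 1"] strict_mono_less_eq[OF assms(1), THEN iffD2])
  finally show "f x < l'" .
qed

lemma DERIV_zero_tendsto_imp_eq:
  fixes f :: "real \<Rightarrow> real"
  assumes "\<And>x. (f has_real_derivative 0) (at x)" and "(f \<longlongrightarrow> l) F" and "F \<noteq> bot"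
  shows "f x = l"
proof -
  have "f = (\<lambda>_. f x)"
    using DERIV_isconst_all assms(1) by blast
  with assms(2,3) show ?thesis
    by (metis tendsto_const_iff)
qed

lemma quadratic_equal_values:
  fixes \<alpha> v p q y :: real
  assumes "\<alpha> * p\<^sup>2 - v * p = \<alpha> * q\<^sup>2 - v * q" and "p \<noteq> q"
  shows "\<alpha> * (p + q) = v"
    and "(\<alpha> * y\<^sup>2 - v * y) - (\<alpha> * p\<^sup>2 - v * p) = \<alpha> * (y - p) * (y - q)"
proof -
  have "(p - q) * (\<alpha> * (p + q) - v) = 0"
    using assms(1) by (simp add: power2_eq_square algebra_simps)
  with assms(2) show *: "\<alpha> * (p + q) = v" by simp
  show "(\<alpha> * y\<^sup>2 - v * y) - (\<alpha> * p\<^sup>2 - v * p) = \<alpha> * (y - p) * (y - q)"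
    unfolding *[symmetric] by (simp add: power2_eq_square algebra_simps)
qed

lemma zero_forward_if_deriv_linearly_bounded:
  fixes f f' :: "real \<Rightarrow> real"
  assumes deriv: "\<And>y. (f has_real_derivative f' y) (at y)"
    and bound: "\<And>y. \<bar>f' y\<bar> \<le> L * \<bar>f y\<bar>"
    and "f x0 = 0" and "x0 \<le> x"
  shows "f x = 0"
proof -
  define H where "H y = (f y)\<^sup>2 * exp (- 2 * L * y)" for y
  have "H x \<le> H x0"
  proof (rule DERIV_nonpos_imp_nonincreasing[where f = H, OF \<open>x0 \<le> x\<close>])
    fix y
    have "(H has_real_derivative 2 * exp (- 2 * L * y) * (f y * f' y - L * (f y)\<^sup>2)) (at y)"
      unfolding H_def by (auto intro!: derivative_eq_intros deriv simp: algebra_simps)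
    moreover have "f y * f' y \<le> L * (f y)\<^sup>2"
    proof -
      have "f y * f' y \<le> \<bar>f y\<bar> * \<bar>f' y\<bar>"
        by (simp add: abs_mult[symmetric])
      also have "\<dots> \<le> \<bar>f y\<bar> * (L * \<bar>f y\<bar>)"
        by (intro mult_left_mono bound) simp
      finally show ?thesis
        by (simp add: power2_eq_square abs_mult_self_eq algebra_simps)
    qed
    ultimately show "\<exists>d. (H has_real_derivative d) (at y) \<and> d \<le> 0"
      by (intro exI conjI) (auto simp: mult_nonneg_nonpos)
  qed
  then have "(f x)\<^sup>2 * exp (- 2 * L * x) \<le> 0"
    using \<open>f x0 = 0\<close> by (simp add: H_def)
  then show "f x = 0"
    by (simp add: mult_le_0_iff)
qed

lemma zero_if_deriv_linearly_bounded:
  fixes f f' :: "real \<Rightarrow> real"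
  assumes deriv: "\<And>y. (f has_real_derivative f' y) (at y)"
    and bound: "\<And>y. \<bar>f' y\<bar> \<le> L * \<bar>f y\<bar>"
    and "f x0 = 0"
  shows "f x = 0"
proof (cases "x0 \<le> x")
  case True
  then show ?thesis
    using zero_forward_if_deriv_linearly_bounded[OF deriv bound \<open>f x0 = 0\<close>] by blast
next
  case False
  have "f (- (- x)) = 0"
  proof (rule zero_forward_if_deriv_linearly_bounded[of "\<lambda>y. f (- y)" "\<lambda>y. - f' (- y)" L "- x0"])
    show "((\<lambda>y. f (- y)) has_real_derivative - f' (- y)) (at y)" for y
      using deriv[of "- y"] by (simp add: DERIV_mirror)
  qed (use False bound \<open>f x0 = 0\<close> in auto)
  then show ?thesis by simp
qed

lemma tendsto_state_iff:
  "(state a b r s \<longlongrightarrow> (p, q, u, w)) F \<longleftrightarrow>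
     (a \<longlongrightarrow> p) F \<and> (b \<longlongrightarrow> q) F \<and> (r \<longlongrightarrow> u) F \<and> (s \<longlongrightarrow> w) F"
  (is "?lim \<longleftrightarrow> _")
proof
  assume ?lim
  from tendsto_fst[OF this] tendsto_fst[OF tendsto_snd[OF this]]
    tendsto_fst[OF tendsto_snd[OF tendsto_snd[OF this]]] tendsto_snd[OF tendsto_snd[OF tendsto_snd[OF this]]]
  show "(a \<longlongrightarrow> p) F \<and> (b \<longlongrightarrow> q) F \<and> (r \<longlongrightarrow> u) F \<and> (s \<longlongrightarrow> w) F"
    by (simp add: state_def)
next
  assume "(a \<longlongrightarrow> p) F \<and> (b \<longlongrightarrow> q) F \<and> (r \<longlongrightarrow> u) F \<and> (s \<longlongrightarrow> w) F"
  then have "((\<lambda>x. (a x, b x, r x, s x)) \<longlongrightarrow> (p, q, u, w)) F"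
    by (auto intro!: tendsto_Pair)
  then show ?lim
    by (simp add: state_def[abs_def])
qed

lemma trajectory_cubic_invariant:
  assumes "trajectory v a b r s"
  shows "((\<lambda>x. (s x ^ 3 - 3 * s x * (r x)\<^sup>2 - 2 * \<bar>r x\<bar> ^ 3) * exp (3 * v * x))
           has_real_derivative 0) (at x)"
proof -
  define r' where "r' = - v * r x - s x * a x / 2 + a x * \<bar>r x\<bar> / 2"
  define s' where "s' = - v * s x - r x * a x"
  have dr: "(r has_real_derivative r') (at x)" and ds: "(s has_real_derivative s') (at x)"
    using assms unfolding trajectory_def r'_def s'_def by auto
  have "((\<lambda>x. (s x ^ 3 - 3 * s x * (r x)\<^sup>2 - 2 * \<bar>r x\<bar> ^ 3) * exp (3 * v * x))
         has_real_derivative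
           (3 * (s x)\<^sup>2 * s' - 3 * (s' * (r x)\<^sup>2 + s x * (2 * r x * r')) - 2 * (3 * r x * \<bar>r x\<bar> * r'))
             * exp (3 * v * x)
           + (s x ^ 3 - 3 * s x * (r x)\<^sup>2 - 2 * \<bar>r x\<bar> ^ 3) * (exp (3 * v * x) * (3 * v))) (at x)"
    by (rule derivative_eq_intros DERIV_chain2[OF has_real_derivative_abs_cube dr] ds dr refl | simp)+
  moreover have "\<bar>r x\<bar> * \<bar>r x\<bar> = r x * r x"
    by (simp add: abs_mult_self_eq)
  then have "(3 * (s x)\<^sup>2 * s' - 3 * (s' * (r x)\<^sup>2 + s x * (2 * r x * r')) - 2 * (3 * r x * \<bar>r x\<bar> * r'))
             * exp (3 * v * x)
           + (s x ^ 3 - 3 * s x * (r x)\<^sup>2 - 2 * \<bar>r x\<bar> ^ 3) * (exp (3 * v * x) * (3 * v)) = 0"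
    unfolding r'_def s'_def by algebra
  ultimately show ?thesis by simp
qed

lemma nonconstant_if_r_nonzero:
  assumes "trajectory v a b r s" and "r x \<noteq> 0"
  shows "nonconstant a b r s"
proof (rule ccontr)
  assume "\<not> nonconstant a b r s"
  then have "a = (\<lambda>_. a x)"
    by (auto simp: nonconstant_def state_def)
  then have "(a has_real_derivative 0) (at x)"
    by (metis DERIV_const)
  moreover have "(a has_real_derivative r x) (at x)"
    using assms(1) by (simp add: trajectory_def)
  ultimately show False
    using assms(2) DERIV_unique by blast
qed

locale connecting_orbit =
  fixes v am bm ap bp :: real and a b r s :: "real \<Rightarrow> real"
  assumes trajectory: "trajectory v a b r s"
    and nonconstant: "nonconstant a b r s"
    and tendsto_at_bot: "(state a b r s \<longlongrightarrow> (am, bm, 0, 0)) at_bot"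
    and tendsto_at_top: "(state a b r s \<longlongrightarrow> (ap, bp, 0, 0)) at_top"
begin

lemma a_deriv: "(a has_real_derivative r x) (at x)"
  and b_deriv: "(b has_real_derivative s x) (at x)"
  and r_deriv: "(r has_real_derivative (- v * r x - s x * a x / 2 + a x * \<bar>r x\<bar> / 2)) (at x)"
  and s_deriv: "(s has_real_derivative (- v * s x - r x * a x)) (at x)"
  using trajectory by (auto simp: trajectory_def)

lemma a_at_bot: "(a \<longlongrightarrow> am) at_bot"
  and b_at_bot: "(b \<longlongrightarrow> bm) at_bot"
  and r_at_bot: "(r \<longlongrightarrow> 0) at_bot"
  and s_at_bot: "(s \<longlongrightarrow> 0) at_bot"
  using tendsto_at_bot by (simp_all add: tendsto_state_iff)

lemma a_at_top: "(a \<longlongrightarrow> ap) at_top"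
  and b_at_top: "(b \<longlongrightarrow> bp) at_top"
  and r_at_top: "(r \<longlongrightarrow> 0) at_top"
  and s_at_top: "(s \<longlongrightarrow> 0) at_top"
  using tendsto_at_top by (simp_all add: tendsto_state_iff)

lemma continuous_on_a: "continuous_on UNIV a"
  and continuous_on_r: "continuous_on UNIV r"
  and continuous_on_s: "continuous_on UNIV s"
  using a_deriv r_deriv s_deriv
  by (meson DERIV_isCont continuous_at_imp_continuous_on)+

text \<open>The weight \<open>exp (3 v x)\<close> is bounded at one of the two ends, where the cubic tends to \<open>0\<close>;
  so the constant value of the weighted invariant is \<open>0\<close>.\<close>
lemma cubic_invariant_vanishes: "s x ^ 3 - 3 * s x * (r x)\<^sup>2 - 2 * \<bar>r x\<bar> ^ 3 = 0"
proof -
  define P where "P y = s y ^ 3 - 3 * s y * (r y)\<^sup>2 - 2 * \<bar>r y\<bar> ^ 3" for y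
  have deriv: "((\<lambda>y. P y * exp (3 * v * y)) has_real_derivative 0) (at y)" for y
    unfolding P_def by (rule trajectory_cubic_invariant[OF trajectory])
  have weighted_tendsto_0: "((\<lambda>y. P y * exp (3 * v * y)) \<longlongrightarrow> 0) F"
    if "(P \<longlongrightarrow> 0) F" and "\<forall>\<^sub>F y in F. exp (3 * v * y) \<le> 1" for F
    by (rule Lim_null_comparison[OF _ tendsto_rabs_zero[OF that(1)]])
       (use that(2) in \<open>auto elim!: eventually_mono simp: abs_mult mult_left_le\<close>)
  have "P x * exp (3 * v * x) = 0"
  proof (cases "0 \<le> v")
    case True
    have "(P \<longlongrightarrow> 0) at_bot"
      unfolding P_def by (auto intro!: tendsto_eq_intros r_at_bot s_at_bot)
    moreover have "\<forall>\<^sub>F y in at_bot. exp (3 * v * y) \<le> 1"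
      unfolding eventually_at_bot_linorder
      using True by (intro exI[of _ 0]) (simp add: mult_nonneg_nonpos)
    ultimately show ?thesis
      using DERIV_zero_tendsto_imp_eq[OF deriv weighted_tendsto_0] by simp
  next
    case False
    have "(P \<longlongrightarrow> 0) at_top"
      unfolding P_def by (auto intro!: tendsto_eq_intros r_at_top s_at_top)
    moreover have "\<forall>\<^sub>F y in at_top. exp (3 * v * y) \<le> 1"
      unfolding eventually_at_top_linorder
      using False by (intro exI[of _ 0]) (simp add: mult_nonpos_nonneg)
    ultimately show ?thesis
      using DERIV_zero_tendsto_imp_eq[OF deriv weighted_tendsto_0] by simp
  qed
  then show ?thesis
    by (simp add: P_def)
qed

lemma s_cases: "s x = - \<bar>r x\<bar> \<or> s x = 2 * \<bar>r x\<bar>"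
proof -
  have "\<bar>r x\<bar> * \<bar>r x\<bar> = r x * r x"
    by (simp add: abs_mult_self_eq)
  with cubic_invariant_vanishes[of x] have "(s x + \<bar>r x\<bar>)\<^sup>2 * (s x - 2 * \<bar>r x\<bar>) = 0"
    by algebra
  then show ?thesis by auto
qed

text \<open>Since \<open>|s| \<le> 2|r|\<close> and \<open>a\<close> is bounded, \<open>r\<close> obeys a linear differential inequality,
  so a single zero of \<open>r\<close> would force \<open>r = s = 0\<close> and the trajectory to be constant.\<close>
lemma r_nonzero: "r x \<noteq> 0"
proof
  assume "r x = 0"
  obtain M where M: "\<And>y. \<bar>a y\<bar> \<le> M"
    using bounded_if_tendsto_at_bot_at_top[OF continuous_on_a a_at_bot a_at_top] by blast
  then have "0 \<le> M"
    using abs_ge_zero order.trans by blast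
  have "\<bar>- v * r y - s y * a y / 2 + a y * \<bar>r y\<bar> / 2\<bar> \<le> (\<bar>v\<bar> + 2 * M) * \<bar>r y\<bar>" for y
  proof -
    have "\<bar>- v * r y - s y * a y / 2 + a y * \<bar>r y\<bar> / 2\<bar>
        \<le> \<bar>v\<bar> * \<bar>r y\<bar> + \<bar>s y\<bar> * \<bar>a y\<bar> / 2 + \<bar>a y\<bar> * \<bar>r y\<bar> / 2"
      by (simp add: abs_mult[symmetric])
    also have "\<dots> \<le> \<bar>v\<bar> * \<bar>r y\<bar> + (2 * \<bar>r y\<bar>) * M / 2 + M * \<bar>r y\<bar> / 2"
      using s_cases[of y] \<open>0 \<le> M\<close>
      by (intro add_mono mult_mono divide_right_mono M order_refl) auto
    also have "\<dots> \<le> (\<bar>v\<bar> + 2 * M) * \<bar>r y\<bar>"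
      using \<open>0 \<le> M\<close> by (simp add: algebra_simps)
    finally show ?thesis .
  qed
  then have r_zero: "r y = 0" for y
    using zero_if_deriv_linearly_bounded[OF r_deriv _ \<open>r x = 0\<close>] by blast
  then have "s y = 0" for y
    using s_cases[of y] by simp
  with r_zero have const: "state a b r s y = state a b r s 0" for y
    using DERIV_isconst_all[of a y 0] DERIV_isconst_all[of b y 0] a_deriv b_deriv
    by (simp add: state_def)
  from nonconstant obtain y z where "state a b r s y \<noteq> state a b r s z"
    unfolding nonconstant_def by blast
  with const[of y] const[of z] show False
    by simp
qed

lemma r_sign:
  obtains e where "e = 1 \<or> e = -1" and "\<And>x. 0 < e * r x"
proof -
  consider "\<forall>x. 0 < r x" | "\<forall>x. r x < 0"
    using continuous_nonvanishing_sign_cases[OF continuous_on_r r_nonzero] by blast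
  then show ?thesis
    by cases (use that[of 1] that[of "-1"] in auto)
qed

lemma s_proportional_r:
  assumes "e = 1 \<or> e = -1" and r_pos: "\<And>x. 0 < e * r x"
  obtains c where "c = - e \<or> c = 2 * e" and "\<And>x. s x = c * r x"
proof -
  define k where "k x = s x / (e * r x)" for x
  have abs_r: "\<bar>r x\<bar> = e * r x" for x
    using assms(1) r_pos[of x] by auto
  have k_cases: "k x = -1 \<or> k x = 2" for x
    using s_cases[of x] r_nonzero[of x] assms(1) by (auto simp: k_def abs_r)
  have "continuous_on UNIV (\<lambda>x. k x - 1 / 2)"
    unfolding k_def using r_pos
    by (intro continuous_intros continuous_on_s continuous_on_r) (metis less_irrefl)
  moreover have "k x - 1 / 2 \<noteq> 0" for x
    using k_cases[of x] by auto
  ultimately consider "\<forall>x. 0 < k x - 1 / 2" | "\<forall>x. k x - 1 / 2 < 0"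
    using continuous_nonvanishing_sign_cases by blast
  moreover have "s x = k x * e * r x" for x
    using r_nonzero[of x] assms(1) by (auto simp: k_def)
  ultimately show ?thesis
  proof cases
    case 1
    then have "k x = 2" for x
      using k_cases[of x] spec[OF 1, of x] by auto
    with \<open>\<And>x. s x = k x * e * r x\<close> show ?thesis
      using that[of "2 * e"] by simp
  next
    case 2
    then have "k x = -1" for x
      using k_cases[of x] spec[OF 2, of x] by auto
    with \<open>\<And>x. s x = k x * e * r x\<close> show ?thesis
      using that[of "- e"] by simp
  qed
qed

lemma a_strictly_between_limits:
  assumes "e = 1 \<or> e = -1" and r_pos: "\<And>x. 0 < e * r x"
  shows "e * am < e * a x" and "e * a x < e * ap"
proof -
  have "strict_mono (\<lambda>x. e * a x)"
  proof (rule strict_monoI)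
    fix x y :: real
    assume "x < y"
    show "e * a x < e * a y"
    proof (rule DERIV_pos_imp_increasing[of x y "\<lambda>x. e * a x", OF \<open>x < y\<close>])
      show "\<exists>d. ((\<lambda>x. e * a x) has_real_derivative d) (at z) \<and> 0 < d" for z
        using r_pos[of z] DERIV_cmult[OF a_deriv, of e] by blast
    qed
  qed
  from strict_mono_between_limits[OF this tendsto_mult_left[OF a_at_bot] tendsto_mult_left[OF a_at_top]]
  show "e * am < e * a x" and "e * a x < e * ap" .
qed

lemma first_integral_r:
  assumes abs_r: "\<And>x. \<bar>r x\<bar> = e * r x" and s_eq: "\<And>x. s x = c * r x"
  defines "Q \<equiv> \<lambda>y. (e - c) / 4 * y\<^sup>2 - v * y"
  shows "r x = Q (a x) - Q am" and "Q am = Q ap"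
proof -
  have deriv: "((\<lambda>x. r x - Q (a x)) has_real_derivative 0) (at x)" for x
  proof -
    have "((\<lambda>x. r x - Q (a x)) has_real_derivative
        (- v * r x - s x * a x / 2 + a x * \<bar>r x\<bar> / 2) - ((e - c) / 4 * (2 * a x * r x) - v * r x)) (at x)"
      unfolding Q_def by (rule derivative_eq_intros r_deriv a_deriv refl | simp)+
    then show ?thesis
      by (simp add: s_eq abs_r field_simps)
  qed
  have "((\<lambda>x. r x - Q (a x)) \<longlongrightarrow> 0 - Q am) at_bot"
    unfolding Q_def by (intro tendsto_intros r_at_bot a_at_bot)
  from DERIV_zero_tendsto_imp_eq[OF deriv this]
  have bot: "r x - Q (a x) = - Q am" for x by simp
  have "((\<lambda>x. r x - Q (a x)) \<longlongrightarrow> 0 - Q ap) at_top"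
    unfolding Q_def by (intro tendsto_intros r_at_top a_at_top)
  from DERIV_zero_tendsto_imp_eq[OF deriv this]
  have top: "r x - Q (a x) = - Q ap" for x by simp
  from bot[of x] top[of x] show "r x = Q (a x) - Q am" and "Q am = Q ap"
    by simp_all
qed

lemma first_integral_b:
  assumes s_eq: "\<And>x. s x = c * r x"
  shows "bm - c * am = bp - c * ap"
proof -
  have deriv: "((\<lambda>x. b x - c * a x) has_real_derivative 0) (at x)" for x
    using DERIV_diff[OF b_deriv DERIV_cmult[OF a_deriv, of c]] by (simp add: s_eq)
  have "b 0 - c * a 0 = bm - c * am"
    by (rule DERIV_zero_tendsto_imp_eq[OF deriv]) (auto intro!: tendsto_intros b_at_bot a_at_bot)
  moreover have "b 0 - c * a 0 = bp - c * ap"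
    by (rule DERIV_zero_tendsto_imp_eq[OF deriv]) (auto intro!: tendsto_intros b_at_top a_at_top)
  ultimately show ?thesis by simp
qed

text \<open>Both limits of \<open>a\<close> are roots of the quadratic \<open>r = Q(a) - Q(am)\<close>, and \<open>a\<close> runs strictly
  between them; the sign of \<open>r\<close> on that interval rules out \<open>s = -e r\<close> and forces \<open>s = 2 e r\<close>.\<close>
lemma connecting_orbit_constraints:
  obtains e where "e = 1 \<or> e = -1" and "\<And>x. 0 < e * r x"
    and "am + ap = -4 * e * v" and "bp - bm = 2 * e * (ap - am)" and "0 < e * (ap - am)"
proof -
  obtain e where e: "e = 1 \<or> e = -1" and r_pos: "\<And>x. 0 < e * r x"
    using r_sign by blast
  obtain c where c: "c = - e \<or> c = 2 * e" and s_eq: "\<And>x. s x = c * r x"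
    using s_proportional_r[OF e r_pos] by blast
  have abs_r: "\<bar>r x\<bar> = e * r x" for x
    using e r_pos[of x] by auto
  have between: "e * am < e * a 0" "e * a 0 < e * ap"
    using a_strictly_between_limits[OF e r_pos] by blast+
  then have "am \<noteq> ap" and gap: "0 < e * (ap - am)"
    by (auto simp: algebra_simps)
  have "(a 0 - am) * (a 0 - ap) = (e * a 0 - e * am) * (e * a 0 - e * ap)"
    using e by (auto simp: algebra_simps)
  also have "\<dots> < 0"
    using between by (intro mult_pos_neg) auto
  finally have inside: "(a 0 - am) * (a 0 - ap) < 0" .
  define \<alpha> where "\<alpha> = (e - c) / 4"
  have "\<alpha> * am\<^sup>2 - v * am = \<alpha> * ap\<^sup>2 - v * ap" and "r 0 = (\<alpha> * (a 0)\<^sup>2 - v * a 0) - (\<alpha> * am\<^sup>2 - v * am)"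
    using first_integral_r[OF abs_r s_eq] unfolding \<alpha>_def by blast+
  with \<open>am \<noteq> ap\<close> have sum: "\<alpha> * (am + ap) = v" and "r 0 = \<alpha> * (a 0 - am) * (a 0 - ap)"
    using quadratic_equal_values by metis+
  with r_pos[of 0] have "0 < (e * \<alpha>) * ((a 0 - am) * (a 0 - ap))"
    by (simp add: ac_simps)
  with inside have "e * \<alpha> < 0"
    using mult_nonneg_nonpos[of "e * \<alpha>" "(a 0 - am) * (a 0 - ap)"] by linarith
  with c e have "c = 2 * e"
    by (auto simp: \<alpha>_def)
  show ?thesis
  proof (rule that[OF e r_pos _ _ gap])
    show "am + ap = -4 * e * v"
      using sum e \<open>c = 2 * e\<close> by (auto simp: \<alpha>_def)
    show "bp - bm = 2 * e * (ap - am)"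
      using first_integral_b[OF s_eq] \<open>c = 2 * e\<close> by (simp add: algebra_simps)
  qed
qed

end

lemma H1_constraints:
  assumes "trajectory v a b r s" and "nonconstant a b r s" and "H1 a0 b0 a b r s"
  shows "0 < v" and "(a0, b0) \<in> {(4 * v, -8 * v + 2), (-4 * v, -8 * v + 2)}"
    and "a0 = 4 * v \<Longrightarrow> r x < 0" and "a0 = -4 * v \<Longrightarrow> 0 < r x"
proof -
  interpret connecting_orbit v a0 b0 0 2 a b r s
    using assms by unfold_locales (auto simp: H1_def)
  obtain e where "e = 1 \<or> e = -1" and "\<And>x. 0 < e * r x"
    and "a0 + 0 = -4 * e * v" and "2 - b0 = 2 * e * (0 - a0)" and "0 < e * (0 - a0)"
    using connecting_orbit_constraints by blast
  then show "0 < v" and "(a0, b0) \<in> {(4 * v, -8 * v + 2), (-4 * v, -8 * v + 2)}"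
    and "a0 = 4 * v \<Longrightarrow> r x < 0" and "a0 = -4 * v \<Longrightarrow> 0 < r x"
    by (auto elim!: disjE)
qed

lemma H2_constraints:
  assumes "trajectory v a b r s" and "nonconstant a b r s" and "H2 a0 b0 a b r s"
  shows "v < 0" and "(a0, b0) \<in> {(4 * v, -8 * v - 2), (-4 * v, -8 * v - 2)}"
    and "a0 = 4 * v \<Longrightarrow> r x < 0" and "a0 = -4 * v \<Longrightarrow> 0 < r x"
proof -
  interpret connecting_orbit v 0 "-2" a0 b0 a b r s
    using assms by unfold_locales (auto simp: H2_def)
  obtain e where "e = 1 \<or> e = -1" and "\<And>x. 0 < e * r x"
    and "0 + a0 = -4 * e * v" and "b0 - -2 = 2 * e * (a0 - 0)" and "0 < e * (a0 - 0)"
    using connecting_orbit_constraints by blast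
  then show "v < 0" and "(a0, b0) \<in> {(4 * v, -8 * v - 2), (-4 * v, -8 * v - 2)}"
    and "a0 = 4 * v \<Longrightarrow> r x < 0" and "a0 = -4 * v \<Longrightarrow> 0 < r x"
    by (auto elim!: disjE)
qed

lemma zero_speed_limits_nonzero:
  assumes "trajectory 0 a b r s" and "nonconstant a b r s"
    and "(state a b r s \<longlongrightarrow> (am, bm, 0, 0)) at_bot" and "(state a b r s \<longlongrightarrow> (ap, bp, 0, 0)) at_top"
  shows "am \<noteq> 0 \<and> ap \<noteq> 0"
proof -
  interpret connecting_orbit 0 am bm ap bp a b r s
    using assms by unfold_locales
  obtain e where "am + ap = 0" and "0 < e * (ap - am)"
    using connecting_orbit_constraints by auto
  then show ?thesis by auto
qed

lemma trajectory_of_logistic: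
  assumes e: "e = 1 \<or> e = -1"
    and a_deriv: "\<And>x. (a has_real_derivative r x) (at x)"
    and r_eq: "\<And>x. r x = - e / 4 * (a x)\<^sup>2 - v * a x"
    and r_sign: "\<And>x. 0 \<le> e * r x"
  shows "trajectory v a (\<lambda>x. \<beta> + 2 * e * a x) r (\<lambda>x. 2 * e * r x)"
proof -
  have abs_r: "\<bar>r x\<bar> = e * r x" for x
    using e r_sign[of x] by auto
  have r_deriv: "(r has_real_derivative - (v + e * a x / 2) * r x) (at x)" for x
  proof -
    have "((\<lambda>x. - e / 4 * (a x)\<^sup>2 - v * a x) has_real_derivative - e / 4 * (2 * a x * r x) - v * r x) (at x)"
      by (rule derivative_eq_intros a_deriv refl | simp)+
    moreover have "(\<lambda>x. - e / 4 * (a x)\<^sup>2 - v * a x) = r"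
      using r_eq by auto
    ultimately have "(r has_real_derivative - e / 4 * (2 * a x * r x) - v * r x) (at x)"
      by simp
    then show ?thesis
      by (rule DERIV_cong) (simp add: algebra_simps)
  qed
  have "e * e = 1"
    using e by auto
  show ?thesis
    unfolding trajectory_def
  proof (intro allI conjI)
    fix x
    show "(a has_real_derivative r x) (at x)"
      by (rule a_deriv)
    show "((\<lambda>x. \<beta> + 2 * e * a x) has_real_derivative 2 * e * r x) (at x)"
      by (auto intro!: derivative_eq_intros a_deriv)
    show "(r has_real_derivative - v * r x - 2 * e * r x * a x / 2 + a x * \<bar>r x\<bar> / 2) (at x)"
      using r_deriv[of x] by (simp add: abs_r algebra_simps)
    show "((\<lambda>x. 2 * e * r x) has_real_derivative - v * (2 * e * r x) - r x * a x) (at x)"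
      using DERIV_cmult[OF r_deriv[of x], of "2 * e"]
      by (rule DERIV_cong) (use \<open>e * e = 1\<close> in algebra)
  qed
qed

lemma logistic_front:
  fixes e v :: real
  assumes "e = 1 \<or> e = -1"
  defines "a \<equiv> \<lambda>x. - 4 * e * v / (1 + exp (v * x))"
  shows "(a has_real_derivative - e / 4 * (a x)\<^sup>2 - v * a x) (at x)"
    and "e * (- e / 4 * (a x)\<^sup>2 - v * a x) = 4 * v\<^sup>2 * exp (v * x) / (1 + exp (v * x))\<^sup>2"
proof -
  have pos: "0 < 1 + exp (v * x)"
    by (simp add: add_pos_pos)
  have "(a has_real_derivative 4 * e * v\<^sup>2 * exp (v * x) / (1 + exp (v * x))\<^sup>2) (at x)"
    unfolding a_def using pos
    by (auto intro!: derivative_eq_intros simp: power2_eq_square field_simps)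
  moreover have "- e / 4 * (a x)\<^sup>2 - v * a x = 4 * e * v\<^sup>2 * exp (v * x) / (1 + exp (v * x))\<^sup>2"
  proof -
    define D where "D = 1 + exp (v * x)"
    have "D \<noteq> 0"
      using pos by (simp add: D_def)
    then have "- e / 4 * (- 4 * e * v / D)\<^sup>2 - v * (- 4 * e * v / D) = 4 * e * v\<^sup>2 * (D - 1) / D\<^sup>2"
      using assms(1) by (auto simp: power2_eq_square field_simps)
    then show ?thesis
      by (simp add: a_def D_def)
  qed
  ultimately show "(a has_real_derivative - e / 4 * (a x)\<^sup>2 - v * a x) (at x)"
    by simp
  show "e * (- e / 4 * (a x)\<^sup>2 - v * a x) = 4 * v\<^sup>2 * exp (v * x) / (1 + exp (v * x))\<^sup>2"
    unfolding \<open>- e / 4 * (a x)\<^sup>2 - v * a x = _\<close> using assms(1) by auto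
qed

lemma front_solution_exists:
  assumes "v \<noteq> 0" and e: "e = 1 \<or> e = -1"
    and F: "((\<lambda>x. exp (v * x)) \<longlongrightarrow> 0) F" and G: "filterlim (\<lambda>x. exp (v * x)) at_top G"
  shows "\<exists>a b r s. trajectory v a b r s \<and> nonconstant a b r s
           \<and> (state a b r s \<longlongrightarrow> (-4 * e * v, -8 * v + \<beta>, 0, 0)) F
           \<and> (state a b r s \<longlongrightarrow> (0, \<beta>, 0, 0)) G"
proof -
  define a where "a = (\<lambda>x. - 4 * e * v / (1 + exp (v * x)))"
  define r where "r = (\<lambda>x. - e / 4 * (a x)\<^sup>2 - v * a x)"
  define b where "b = (\<lambda>x. \<beta> + 2 * e * a x)"
  define s where "s = (\<lambda>x. 2 * e * r x)"
  have a_deriv: "(a has_real_derivative r x) (at x)" for x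
    using logistic_front(1)[OF e] by (simp add: a_def r_def)
  have r_pos: "0 < e * r x" for x
  proof -
    have "e * r x = 4 * v\<^sup>2 * exp (v * x) / (1 + exp (v * x))\<^sup>2"
      using logistic_front(2)[OF e, of v x] by (simp add: a_def r_def)
    also have "0 < \<dots>"
      using \<open>v \<noteq> 0\<close> add_pos_pos[OF zero_less_one exp_gt_zero[of "v * x"]]
      by (intro divide_pos_pos mult_pos_pos) auto
    finally show ?thesis .
  qed
  have traj: "trajectory v a b r s"
    unfolding b_def s_def
    by (rule trajectory_of_logistic[OF e a_deriv _ less_imp_le[OF r_pos]]) (simp add: r_def)
  have lim: "(state a b r s \<longlongrightarrow> (L, \<beta> + 2 * e * L, - e / 4 * L\<^sup>2 - v * L, 2 * e * (- e / 4 * L\<^sup>2 - v * L))) H"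
    if "(a \<longlongrightarrow> L) H" for L H
    unfolding tendsto_state_iff b_def r_def s_def by (intro conjI tendsto_intros that)
  have "(a \<longlongrightarrow> -4 * e * v / (1 + 0)) F"
    unfolding a_def by (intro tendsto_intros F) simp
  then have "(a \<longlongrightarrow> -4 * e * v) F"
    by simp
  moreover have "\<beta> + 2 * e * (-4 * e * v) = -8 * v + \<beta>" and "- e / 4 * (-4 * e * v)\<^sup>2 - v * (-4 * e * v) = 0"
    using e by (auto simp: power2_eq_square)
  ultimately have "(state a b r s \<longlongrightarrow> (-4 * e * v, -8 * v + \<beta>, 0, 2 * e * 0)) F"
    using lim by metis
  then have "(state a b r s \<longlongrightarrow> (-4 * e * v, -8 * v + \<beta>, 0, 0)) F"
    by simp
  moreover have "((\<lambda>x. inverse (1 + exp (v * x))) \<longlongrightarrow> 0) G"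
    by (intro tendsto_inverse_0_at_top filterlim_tendsto_add_at_top[OF tendsto_const G])
  then have "(a \<longlongrightarrow> -4 * e * v * 0) G"
    unfolding a_def divide_inverse by (rule tendsto_mult_left)
  then have "(state a b r s \<longlongrightarrow> (0, \<beta>, 0, 0)) G"
    using lim[of 0] by simp
  moreover have "nonconstant a b r s"
    using nonconstant_if_r_nonzero[OF traj, of 0] r_pos[of 0] by force
  ultimately show ?thesis
    using traj by blast
qed

lemma H1_solution_exists:
  assumes "0 < v" and "e = 1 \<or> e = -1"
  shows "\<exists>a b r s. trajectory v a b r s \<and> nonconstant a b r s \<and> H1 (-4 * e * v) (-8 * v + 2) a b r s"
proof -
  have "((\<lambda>x. exp (v * x)) \<longlongrightarrow> 0) at_bot" and "filterlim (\<lambda>x. exp (v * x)) at_top at_top"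
    using assms(1) by real_asymp+
  with assms show ?thesis
    unfolding H1_def by (intro front_solution_exists) auto
qed

lemma H2_solution_exists:
  assumes "v < 0" and "e = 1 \<or> e = -1"
  shows "\<exists>a b r s. trajectory v a b r s \<and> nonconstant a b r s \<and> H2 (-4 * e * v) (-8 * v - 2) a b r s"
proof -
  have "((\<lambda>x. exp (v * x)) \<longlongrightarrow> 0) at_top" and "filterlim (\<lambda>x. exp (v * x)) at_top at_bot"
    using assms(1) by real_asymp+
  with assms front_solution_exists[of v e at_top at_bot "-2"] show ?thesis
    unfolding H2_def by auto
qed

lemma H1_endpoint_set:
  assumes "0 < v"
  shows "{(a0, b0). \<exists>a b r s. trajectory v a b r s \<and> nonconstant a b r s \<and> H1 a0 b0 a b r s}
      = {(4 * v, -8 * v + 2), (-4 * v, -8 * v + 2)}" (is "?S = ?T")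
proof
  show "?S \<subseteq> ?T"
    using H1_constraints(2) by blast
  show "?T \<subseteq> ?S"
    using H1_solution_exists[OF assms, of 1] H1_solution_exists[OF assms, of "-1"] by auto
qed

lemma H2_endpoint_set:
  assumes "v < 0"
  shows "{(a0, b0). \<exists>a b r s. trajectory v a b r s \<and> nonconstant a b r s \<and> H2 a0 b0 a b r s}
      = {(4 * v, -8 * v - 2), (-4 * v, -8 * v - 2)}" (is "?S = ?T")
proof
  show "?S \<subseteq> ?T"
    using H2_constraints(2) by blast
  show "?T \<subseteq> ?S"
    using H2_solution_exists[OF assms, of 1] H2_solution_exists[OF assms, of "-1"] by auto
qed

theorem theorem5:
  shows
   "(\<forall>v>0.
      {(a0, b0). \<exists>a b r s. trajectory v a b r s \<and> nonconstant a b r s \<and> H1 a0 b0 a b r s}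
        = {(4 * v, -8 * v + 2), (-4 * v, -8 * v + 2)}
    \<and> (\<forall>a b r s. trajectory v a b r s \<and> nonconstant a b r s \<and> H1 (4 * v) (-8 * v + 2) a b r s
          \<longrightarrow> (\<forall>x. r x < 0))
    \<and> (\<forall>a b r s. trajectory v a b r s \<and> nonconstant a b r s \<and> H1 (-4 * v) (-8 * v + 2) a b r s
          \<longrightarrow> (\<forall>x. r x > 0))
    \<and> (\<forall>a0 b0 a b r s. \<not> (trajectory v a b r s \<and> nonconstant a b r s \<and> H2 a0 b0 a b r s)))
  \<and> (\<forall>a b r s am bm ap bp. trajectory 0 a b r s \<and> nonconstant a b r s
        \<and> (state a b r s \<longlongrightarrow> (am, bm, 0, 0)) at_bot
        \<and> (state a b r s \<longlongrightarrow> (ap, bp, 0, 0)) at_top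
        \<longrightarrow> am \<noteq> 0 \<and> ap \<noteq> 0)
  \<and> (\<forall>v<0.
      {(a0, b0). \<exists>a b r s. trajectory v a b r s \<and> nonconstant a b r s \<and> H2 a0 b0 a b r s}
        = {(4 * v, -8 * v - 2), (-4 * v, -8 * v - 2)}
    \<and> (\<forall>a b r s. trajectory v a b r s \<and> nonconstant a b r s \<and> H2 (4 * v) (-8 * v - 2) a b r s
          \<longrightarrow> (\<forall>x. r x < 0))
    \<and> (\<forall>a b r s. trajectory v a b r s \<and> nonconstant a b r s \<and> H2 (-4 * v) (-8 * v - 2) a b r s
          \<longrightarrow> (\<forall>x. r x > 0))
    \<and> (\<forall>a0 b0 a b r s. \<not> (trajectory v a b r s \<and> nonconstant a b r s \<and> H1 a0 b0 a b r s)))"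
  apply (intro conjI allI impI notI; (elim conjE)?)
  subgoal by (rule H1_endpoint_set)
  subgoal using H1_constraints(3) by blast
  subgoal using H1_constraints(4) by blast
  subgoal using H2_constraints(1) by fastforce
  subgoal using zero_speed_limits_nonzero by blast
  subgoal using zero_speed_limits_nonzero by blast
  subgoal by (rule H2_endpoint_set)
  subgoal using H2_constraints(3) by blast
  subgoal using H2_constraints(4) by blast
  subgoal using H1_constraints(1) by fastforce
  done

end
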